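(* Let $\{S^n\}_{n\in\mathbb{N}}$ be an $\mathbb{R}^h$-valued process of integrable random variables that is strongly regular and strongly nearly additive, and suppose $\sup_{n\in\mathbb{N}}\|\mathbb{E}[S^n]\|/|\Lambda^n|<\infty$. Then the limit $\widehat S=\lim_{n\to\infty}\mathbb{E}[S^n]/|\Lambda^n|$ exists in $\mathbb{R}^h$ and $S^n/|\Lambda^n|\to\widehat S$ almost surely as $n\to\infty$.
   Context: Fix $d,h\in\mathbb{N}$, $|\Lambda^n|=(2n)^d$, $\|\cdot\|$ Euclidean norm. Strongly $r$-nearly additive (integer $r\ge0$): there exist $\mathbb{R}^h$-valued random variables $\{S^{n,z}\}_{n\in\mathbb{N},z\in\mathbb{Z}^d}$ with $\{S^{n,z}\}_{z\in\mathbb{Z}^d}$ independent copies of $S^n$ for each $n$, such that $\sup_{m\in\mathbb{N}}|\Lambda^{(2m+1)k}|^{-1}\|S^{(2m+1)k}-\sum_{z\in\mathbb{Z}^d\cap[-m,m]^d}S^{k-r,z}\|\to0$ almost surely as $k\to\infty$; strongly nearly additive = strongly $r$-nearly additive for some $r$. Strongly regular: for each fixed $k\in\mathbb{N}$, with $m_n$ the integer satisfying $(2m_n+1)k\le n<(2m_n+3)k$, $|\Lambda^n|^{-1}\|S^n-S^{(2m_n+1)k}\|\to0$ almost surely as $n\to\infty$. *)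

theory Defs
  imports "HOL-Probability.Probability"
begin

text \<open>Lattice dimension d is CARD('d); sites of Z^d are vectors of type int^'d.
  Values lie in R^h = real^'h with the Euclidean norm.\<close>

definition lam_vol :: "'d::finite itself \<Rightarrow> nat \<Rightarrow> real" where
  "lam_vol _ n = (2 * real n) ^ CARD('d)"

definition zbox :: "nat \<Rightarrow> (int^'d::finite) set" where
  "zbox m = {z. \<forall>i. \<bar>z $ i\<bar> \<le> int m}"

definition mblock :: "nat \<Rightarrow> nat \<Rightarrow> nat" where
  "mblock k n = (THE m. (2*m+1)*k \<le> n \<and> n < (2*m+3)*k)"

definition strongly_regular ::
  "'a measure \<Rightarrow> 'd::finite itself \<Rightarrow> (nat \<Rightarrow> 'a \<Rightarrow> real^'h::finite) \<Rightarrow> bool" where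
  "strongly_regular M D S \<longleftrightarrow>
     (\<forall>k::nat. k \<ge> 1 \<longrightarrow>
        (AE \<omega> in M. (\<lambda>n. norm (S n \<omega> - S ((2 * mblock k n + 1) * k) \<omega>) / lam_vol D n)
                      \<longlonglongrightarrow> 0))"

definition strongly_r_nearly_additive ::
  "'a measure \<Rightarrow> 'd::finite itself \<Rightarrow> (nat \<Rightarrow> 'a \<Rightarrow> real^'h::finite) \<Rightarrow> nat \<Rightarrow> bool" where
  "strongly_r_nearly_additive M D S r \<longleftrightarrow>
     (\<exists>Sc :: nat \<Rightarrow> int^'d \<Rightarrow> 'a \<Rightarrow> real^'h.
        (\<forall>n\<ge>1. (\<forall>z. Sc n z \<in> borel_measurable M \<and>
                     distr M borel (Sc n z) = distr M borel (S n))
               \<and> prob_space.indep_vars M (\<lambda>_. borel) (Sc n) UNIV) \<and>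
        (AE \<omega> in M.
           ((\<lambda>k. SUP m\<in>{1::nat..}.
                 ereal (norm (S ((2*m+1)*k) \<omega> - (\<Sum>z\<in>(zbox m :: (int^'d) set). Sc (k - r) z \<omega>))
                        / lam_vol D ((2*m+1)*k)))
            \<longlonglongrightarrow> 0)))"

definition strongly_nearly_additive ::
  "'a measure \<Rightarrow> 'd::finite itself \<Rightarrow> (nat \<Rightarrow> 'a \<Rightarrow> real^'h::finite) \<Rightarrow> bool" where
  "strongly_nearly_additive M D S \<longleftrightarrow> (\<exists>r. strongly_r_nearly_additive M D S r)"

end

theory Submission
  imports Defs
begin

text \<open>Strong near additivity compares \<open>S\<^sup>n\<close> at the block lengths \<open>n = (2m+1)k\<close> with sums of
  independent copies of \<open>S\<^bsup>k-r\<^esup>\<close> over the boxes \<open>[-m,m]\<^sup>d\<close>.  For fixed \<open>k\<close> these box averages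
  converge almost surely to \<open>E S\<^bsup>k-r\<^esup>\<close>, by Etemadi's strong law of large numbers applied along an
  enumeration of \<open>\<int>\<^sup>d\<close> that exhausts the boxes in order.  So for large \<open>k\<close> the normalized values
  \<open>S\<^sup>n / |\<Lambda>\<^sup>n|\<close> at the block lengths stay close to \<open>E S\<^bsup>k-r\<^esup> / |\<Lambda>\<^sup>k|\<close>, and strong
  regularity extends this to all \<open>n\<close>.  Hence \<open>S\<^sup>n / |\<Lambda>\<^sup>n|\<close> is almost surely Cauchy, and its
  limit is also the limit of the normalized means; being deterministic, it is the same for almost
  every sample.\<close>

definition trunc :: "nat \<Rightarrow> real \<Rightarrow> real" where
  "trunc i x = (if x \<le> real (Suc i) then x else 0)"

lemma borel_measurable_trunc [measurable]: "trunc i \<in> borel_measurable borel"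
  unfolding trunc_def by measurable

lemma sum_count_Suc_less_le:
  fixes y :: real
  assumes "0 \<le> y"
  shows "(\<Sum>i<n. if real (Suc i) < y then 1 else 0) \<le> y"
proof -
  have "(\<Sum>i<n. if real (Suc i) < y then 1 else 0) \<le> min y (real n)"
    by (induction n) (use assms in auto)
  then show ?thesis by simp
qed

lemma sum_inverse_square_tail_le:
  assumes "m \<le> K"
  shows "(\<Sum>i=m..<K. 1 / real (Suc i)^2) \<le> 2 / real (Suc m) - 2 / real (Suc K)"
  using assms
proof (induction K)
  case (Suc K)
  show ?case
  proof (cases "m = Suc K")
    case False
    then have "m \<le> K" using Suc.prems by simp
    have "1 / real (Suc K)^2 \<le> 2 / (real (Suc K) * real (Suc (Suc K)))"
      by (simp add: divide_simps power2_eq_square)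
    also have "\<dots> = 2 / real (Suc K) - 2 / real (Suc (Suc K))"
      by (simp add: field_simps)
    finally show ?thesis using Suc.IH[OF \<open>m \<le> K\<close>] \<open>m \<le> K\<close> by simp
  qed simp
qed simp

lemma sum_trunc_square_le:
  fixes x :: real
  assumes x: "0 \<le> x"
  shows "(\<Sum>i<K. trunc i x^2 / real (Suc i)^2) \<le> 2 * x"
proof -
  define m where "m = nat (\<lceil>x\<rceil> - 1)"
  have m: "x \<le> real (Suc m)" unfolding m_def using x by linarith
  have "trunc i x = 0" if "i < m" for i
    using that unfolding trunc_def m_def by (auto split: if_splits) linarith
  then have "(\<Sum>i<K. trunc i x^2 / real (Suc i)^2) = (\<Sum>i=m..<K. trunc i x^2 / real (Suc i)^2)"
    by (intro sum.mono_neutral_right) auto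
  also have "\<dots> \<le> (\<Sum>i=m..<K. x^2 * (1 / real (Suc i)^2))"
    by (intro sum_mono) (auto simp: trunc_def field_simps)
  also have "\<dots> = x^2 * (\<Sum>i=m..<K. 1 / real (Suc i)^2)"
    by (simp add: sum_distrib_left)
  also have "\<dots> \<le> x^2 * (2 / real (Suc m))"
  proof (cases "m \<le> K")
    case True
    have "(\<Sum>i=m..<K. 1 / real (Suc i)^2) \<le> 2 / real (Suc m)"
      using sum_inverse_square_tail_le[OF True] by (smt (verit) divide_nonneg_nonneg of_nat_0_le_iff)
    then show ?thesis by (intro mult_left_mono) auto
  qed simp
  also have "\<dots> = 2 * x * (x / real (Suc m))"
    by (simp add: power2_eq_square)
  also have "\<dots> \<le> 2 * x"
    using m x by (intro mult_right_le_one_le) auto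
  finally show ?thesis .
qed

definition geom_floor :: "real \<Rightarrow> nat \<Rightarrow> nat" where
  "geom_floor a n = nat \<lfloor>a ^ n\<rfloor>"

context
  fixes a :: real
  assumes a: "1 < a"
begin

lemma geom_floor_le: "real (geom_floor a n) \<le> a ^ n"
  using a by (simp add: geom_floor_def)

lemma geom_floor_gt: "a ^ n - 1 < real (geom_floor a n)"
proof -
  have "0 \<le> \<lfloor>a ^ n\<rfloor>" using a by simp
  then show ?thesis
    unfolding geom_floor_def using real_of_int_floor_add_one_gt[of "a ^ n"] by simp
qed

lemma geom_floor_ge_1: "1 \<le> geom_floor a n"
  unfolding geom_floor_def using one_le_power[of a n] a by (simp add: le_nat_iff)

lemma geom_floor_gt_half: "a ^ n < 2 * real (geom_floor a n)"
  using geom_floor_gt[of n] geom_floor_ge_1[of n] by linarith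

lemma geom_floor_mono: "n \<le> n' \<Longrightarrow> geom_floor a n \<le> geom_floor a n'"
  unfolding geom_floor_def using a by (intro nat_mono floor_mono power_increasing) auto

lemma geom_floor_unbounded: "\<exists>n. m < geom_floor a n"
proof -
  obtain n where "real m + 1 < a ^ n" using real_arch_pow[OF a] by blast
  then show ?thesis using geom_floor_gt[of n] by (intro exI[of _ n]) linarith
qed

lemma filterlim_geom_floor: "filterlim (geom_floor a) at_top sequentially"
  unfolding filterlim_at_top eventually_sequentially
  by (metis geom_floor_mono geom_floor_unbounded less_imp_le order.trans)

lemma eventually_geom_floor_Suc_le:
  "eventually (\<lambda>n. real (geom_floor a (Suc n)) \<le> a^2 * real (geom_floor a n)) sequentially"
proof -
  obtain n0 where n0: "a / (a - 1) < a ^ n0" using real_arch_pow[OF a] by blast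
  show ?thesis unfolding eventually_sequentially
  proof (intro exI[of _ n0] allI impI)
    fix n assume "n0 \<le> n"
    then have "a / (a - 1) \<le> a ^ n" using n0 a power_increasing[of n0 n a] by linarith
    then have "a \<le> a ^ n * (a - 1)" using a by (simp add: divide_le_eq)
    then have "a * a \<le> a * (a ^ n * (a - 1))" using a by (intro mult_left_mono) auto
    then have "a ^ Suc n \<le> a^2 * (a ^ n - 1)" by (simp add: power2_eq_square algebra_simps)
    also have "\<dots> \<le> a^2 * real (geom_floor a n)"
      using geom_floor_gt[of n] by (intro mult_left_mono) auto
    finally show "real (geom_floor a (Suc n)) \<le> a^2 * real (geom_floor a n)"
      using geom_floor_le[of "Suc n"] by linarith
  qed
qed

text \<open>Each index \<open>i\<close> lies below only the terms of \<open>geom_floor a\<close> with \<open>a^n > i\<close>, and along those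
  the weights \<open>1 / geom_floor a n^2 \<le> 4 / a^(2n)\<close> sum geometrically.\<close>

lemma sum_inverse_square_geom_floor_le:
  "(\<Sum>n<N. if i < geom_floor a n then 1 / real (geom_floor a n)^2 else 0)
     \<le> (4 / (1 - 1 / a^2)) / real (Suc i)^2"
proof -
  define b where "b = 1 / a^2"
  have b: "0 < b" "b < 1" unfolding b_def using a by (auto simp: power_one_over)
  have ex: "\<exists>n. real (Suc i) \<le> a ^ n"
    using real_arch_pow[OF a, of "real (Suc i)"] by (auto intro: less_imp_le)
  define n0 where "n0 = (LEAST n. real (Suc i) \<le> a ^ n)"
  have n0: "real (Suc i) \<le> a ^ n0" unfolding n0_def by (rule LeastI_ex[OF ex])
  have term_le: "(if i < geom_floor a n then 1 / real (geom_floor a n)^2 else 0)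
      \<le> (if n0 \<le> n then 4 * b ^ n else 0)" for n
  proof (cases "i < geom_floor a n")
    case True
    then have "real (Suc i) \<le> a ^ n" using geom_floor_le[of n] by linarith
    then have "n0 \<le> n" unfolding n0_def by (rule Least_le)
    have "(a ^ n / 2)^2 \<le> real (geom_floor a n)^2"
      using geom_floor_gt_half[of n] a by (intro power_mono) auto
    then have "1 / real (geom_floor a n)^2 \<le> 1 / (a ^ n / 2)^2"
      using a geom_floor_ge_1[of n] by (intro divide_left_mono) auto
    also have "\<dots> = 4 * b ^ n"
      unfolding b_def using a by (simp add: power_divide power_one_over flip: power_mult)
    finally show ?thesis using True \<open>n0 \<le> n\<close> by simp
  qed (use b in auto)
  have "(\<Sum>n<N. if i < geom_floor a n then 1 / real (geom_floor a n)^2 else 0)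
      \<le> (\<Sum>n<N. if n0 \<le> n then 4 * b ^ n else 0)"
    by (intro sum_mono term_le)
  also have "\<dots> \<le> 4 * b ^ n0 / (1 - b)"
  proof (cases "n0 < N")
    case True
    have "(\<Sum>n<N. if n0 \<le> n then 4 * b ^ n else 0) = 4 * (\<Sum>n=n0..N-1. b ^ n)"
      by (subst sum_distrib_left, rule sum.mono_neutral_cong_right) (use True in auto)
    also have "\<dots> = 4 * ((b ^ n0 - b ^ N) / (1 - b))"
      using True b by (simp add: sum_gp)
    also have "\<dots> \<le> 4 * (b ^ n0 / (1 - b))"
      using b by (intro mult_left_mono divide_right_mono) auto
    finally show ?thesis by simp
  qed (use b in \<open>auto intro!: sum_nonneg\<close>)
  also have "\<dots> \<le> (4 / (1 - 1 / a^2)) / real (Suc i)^2"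
  proof -
    have "b ^ n0 = 1 / (a ^ n0)^2"
      unfolding b_def by (simp add: power_one_over mult.commute flip: power_mult)
    also have "\<dots> \<le> 1 / real (Suc i)^2"
      using n0 a by (intro divide_left_mono power_mono) auto
    finally have "4 * b ^ n0 / (1 - b) \<le> 4 * (1 / real (Suc i)^2) / (1 - b)"
      using b by (intro divide_right_mono mult_left_mono) auto
    then show ?thesis unfolding b_def by (simp add: mult.commute)
  qed
  finally show ?thesis .
qed

end

lemma cesaro_mean_tendsto_0:
  fixes b :: "nat \<Rightarrow> real"
  assumes "b \<longlonglongrightarrow> 0"
  shows "(\<lambda>n. (\<Sum>i<n. b i) / real n) \<longlonglongrightarrow> 0"
proof (rule LIMSEQ_I)
  fix e :: real assume e: "0 < e"
  obtain N where N: "\<And>n. n \<ge> N \<Longrightarrow> norm (b n) < e/2"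
    using LIMSEQ_D[OF assms, of "e/2"] e by auto
  define C where "C = (\<Sum>i<N. norm (b i))"
  obtain N' :: nat where N': "2 * C / e < real N'" using reals_Archimedean2 by blast
  show "\<exists>n0. \<forall>n\<ge>n0. norm ((\<Sum>i<n. b i) / real n - 0) < e"
  proof (intro exI[of _ "Suc (max N N')"] allI impI)
    fix n assume n: "Suc (max N N') \<le> n"
    have "norm (\<Sum>i<n. b i) \<le> (\<Sum>i<n. norm (b i))" by (rule norm_sum)
    also have "\<dots> = C + (\<Sum>i=N..<n. norm (b i))"
      unfolding C_def using n by (metis atLeast0LessThan sum.atLeastLessThan_concat zero_le max.bounded_iff Suc_leD)
    also have "(\<Sum>i=N..<n. norm (b i)) \<le> (\<Sum>i=N..<n. e/2)"
      using N by (intro sum_mono) (auto intro: less_imp_le)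
    also have "\<dots> \<le> real n * (e/2)" using n e by simp
    also have "C < real n * (e/2)"
    proof -
      have "real N' \<le> real n" using n by simp
      then have "2 * C / e < real n" using N' by linarith
      then show ?thesis using e by (simp add: field_simps)
    qed
    finally have "norm (\<Sum>i<n. b i) < real n * e" by (simp add: mult.commute)
    then show "norm ((\<Sum>i<n. b i) / real n - 0) < e"
      using n by (simp add: field_simps)
  qed
qed

lemma cesaro_mean_tendsto:
  fixes b :: "nat \<Rightarrow> real"
  assumes "b \<longlonglongrightarrow> L"
  shows "(\<lambda>n. (\<Sum>i<n. b i) / real n) \<longlonglongrightarrow> L"
proof -
  have "(\<lambda>n. (\<Sum>i<n. b i - L) / real n + L) \<longlonglongrightarrow> 0 + L"
    using assms by (intro tendsto_add cesaro_mean_tendsto_0) (auto simp: LIM_zero)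
  moreover have "\<forall>\<^sub>F n in sequentially. (\<Sum>i<n. b i - L) / real n + L = (\<Sum>i<n. b i) / real n"
    using eventually_gt_at_top[of 0] by eventually_elim (auto simp: sum_subtractf field_simps)
  ultimately show ?thesis by (simp add: tendsto_cong)
qed

lemma geom_floor_bracket:
  assumes a: "1 < a" and m: "geom_floor a N \<le> m"
  obtains n where "N \<le> n" "geom_floor a n \<le> m" "m < geom_floor a (Suc n)"
proof -
  have ex: "\<exists>n. m < geom_floor a n" using geom_floor_unbounded[OF a] .
  define n' where "n' = (LEAST n. m < geom_floor a n)"
  have n': "m < geom_floor a n'" unfolding n'_def by (rule LeastI_ex[OF ex])
  have "N < n'"
    using geom_floor_mono[OF a, of n' N] n' m by (cases "N < n'") auto
  moreover have "geom_floor a (n' - 1) \<le> m"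
    using not_less_Least[of "n' - 1" "\<lambda>n. m < geom_floor a n"] \<open>N < n'\<close> unfolding n'_def by auto
  ultimately show ?thesis using that[of "n' - 1"] n' by auto
qed

text \<open>The interpolation step of Etemadi's argument: between consecutive terms of
  \<open>geom_floor a\<close>, monotonicity sandwiches \<open>T m / m\<close> up to the ratio \<open>a\<^sup>2\<close>.\<close>

lemma avg_close_of_sandwich:
  fixes T :: "nat \<Rightarrow> real"
  assumes mono: "mono T" and nonneg: "\<And>m. 0 \<le> T m" and a: "1 < a" and \<mu>: "0 \<le> \<mu>" and \<eta>: "0 < \<eta>"
    and k: "1 \<le> k" "k \<le> m" "m < k'" "real k' \<le> a^2 * real k"
    and close: "\<bar>T k / real k - \<mu>\<bar> < \<eta>" "\<bar>T k' / real k' - \<mu>\<bar> < \<eta>"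
  shows "\<bar>T m / real m - \<mu>\<bar> \<le> (a^2 - 1) * \<mu> + a^2 * \<eta>"
proof -
  have a2: "1 < a^2" using a by (simp add: one_less_power)
  have T: "T k \<le> T m" "T m \<le> T k'" using k mono by (auto simp: mono_def)
  have "T m / real m \<le> T k' / real k"
    using T k nonneg by (intro frac_le) auto
  also have "\<dots> = (T k' / real k') * (real k' / real k)"
    using k by (simp add: field_simps)
  also have "\<dots> \<le> (\<mu> + \<eta>) * a^2"
    using close k \<mu> \<eta> nonneg by (intro mult_mono) (auto simp: field_simps)
  finally have upper: "T m / real m \<le> (\<mu> + \<eta>) * a^2" .
  have "(\<mu> - \<eta>) / a^2 \<le> (T k / real k) / a^2"
    using close a2 by (intro divide_right_mono) auto
  also have "\<dots> \<le> (T k / real k) * (real k / real k')"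
    using k a2 nonneg[of k] mult_left_mono[of "real k'" "real k * a^2" "T k"]
    by (simp add: divide_simps mult.commute)
  also have "\<dots> = T k / real k'" using k by simp
  also have "\<dots> \<le> T m / real m"
    using T k nonneg by (intro frac_le) auto
  finally have lower: "(\<mu> - \<eta>) / a^2 \<le> T m / real m" .
  have "\<mu> - (\<mu> - \<eta>) / a^2 = (1 - 1/a^2) * \<mu> + (1/a^2) * \<eta>"
    by (simp add: algebra_simps diff_divide_distrib)
  also have "\<dots> \<le> (a^2 - 1) * \<mu> + a^2 * \<eta>"
  proof (intro add_mono mult_right_mono)
    have "0 \<le> (a - 1/a)^2" by simp
    then show "1 - 1/a^2 \<le> a^2 - 1" using a by (simp add: power2_eq_square field_simps)
    show "1/a^2 \<le> a^2" using a2 by (smt (verit) divide_le_eq_1)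
  qed (use \<mu> \<eta> in auto)
  finally show ?thesis using upper lower by (simp add: algebra_simps)
qed

lemma eventually_avg_close_of_geom_floor:
  fixes T :: "nat \<Rightarrow> real"
  assumes mono: "mono T" and nonneg: "\<And>m. 0 \<le> T m"
    and a: "1 < a" and \<eta>: "0 < \<eta>"
    and lim: "(\<lambda>n. T (geom_floor a n) / real (geom_floor a n)) \<longlonglongrightarrow> \<mu>"
  shows "eventually (\<lambda>m. \<bar>T m / real m - \<mu>\<bar> \<le> (a^2 - 1) * \<mu> + a^2 * \<eta>) sequentially"
proof -
  have \<mu>: "0 \<le> \<mu>"
    by (rule LIMSEQ_le_const[OF lim]) (auto intro!: divide_nonneg_nonneg nonneg)
  have "\<forall>\<^sub>F n in sequentially. \<bar>T (geom_floor a n) / real (geom_floor a n) - \<mu>\<bar> < \<eta>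
      \<and> real (geom_floor a (Suc n)) \<le> a^2 * real (geom_floor a n)"
    using tendstoD[OF lim \<eta>] eventually_geom_floor_Suc_le[OF a]
    by eventually_elim (auto simp: dist_real_def)
  then obtain N where N: "\<And>n. N \<le> n \<Longrightarrow> \<bar>T (geom_floor a n) / real (geom_floor a n) - \<mu>\<bar> < \<eta>
      \<and> real (geom_floor a (Suc n)) \<le> a^2 * real (geom_floor a n)"
    unfolding eventually_sequentially by blast
  show ?thesis unfolding eventually_sequentially
  proof (intro exI[of _ "geom_floor a N"] allI impI)
    fix m assume "geom_floor a N \<le> m"
    then obtain n where n: "N \<le> n" "geom_floor a n \<le> m" "m < geom_floor a (Suc n)"
      using geom_floor_bracket[OF a] by blast
    then show "\<bar>T m / real m - \<mu>\<bar> \<le> (a^2 - 1) * \<mu> + a^2 * \<eta>"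
      using N[of n] N[of "Suc n"] geom_floor_ge_1[OF a, of n]
      by (intro avg_close_of_sandwich[OF mono nonneg a \<mu> \<eta>]) auto
  qed
qed

lemma avg_tendsto_of_geom_floor:
  fixes T :: "nat \<Rightarrow> real"
  assumes mono: "mono T" and nonneg: "\<And>m. 0 \<le> T m"
    and lim: "\<And>j. (\<lambda>n. T (geom_floor (1 + 1 / real (Suc j)) n) / real (geom_floor (1 + 1 / real (Suc j)) n))
                    \<longlonglongrightarrow> \<mu>"
  shows "(\<lambda>m. T m / real m) \<longlonglongrightarrow> \<mu>"
proof (rule LIMSEQ_I)
  fix e :: real assume e: "0 < e"
  define \<delta> where "\<delta> j = ((1 + 1 / real (Suc j))^2 - 1) * \<mu> + (1 + 1 / real (Suc j))^2 * (1 / real (Suc j))" for j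
  have "(\<lambda>j. 1 / real (Suc j)) \<longlonglongrightarrow> 0" by (rule LIMSEQ_Suc[OF lim_inverse_n'])
  then have "\<delta> \<longlonglongrightarrow> ((1 + 0)^2 - 1) * \<mu> + (1 + 0)^2 * 0"
    unfolding \<delta>_def by (intro tendsto_intros)
  then have "\<delta> \<longlonglongrightarrow> 0" by simp
  from order_tendstoD(2)[OF this e] obtain j where j: "\<delta> j < e"
    by (metis eventually_sequentially order_refl)
  have "eventually (\<lambda>m. \<bar>T m / real m - \<mu>\<bar> \<le> \<delta> j) sequentially"
    unfolding \<delta>_def by (rule eventually_avg_close_of_geom_floor[OF mono nonneg _ _ lim]) auto
  then show "\<exists>n0. \<forall>m\<ge>n0. norm (T m / real m - \<mu>) < e"
    using j unfolding eventually_sequentially by force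
qed

section \<open>Etemadi's strong law of large numbers\<close>

context prob_space
begin

lemma integral_comp_eq_of_distr_eq:
  fixes X Y :: "'a \<Rightarrow> real" and g :: "real \<Rightarrow> real"
  assumes "distr M borel X = distr M borel Y"
    and [measurable]: "X \<in> borel_measurable M" "Y \<in> borel_measurable M" "g \<in> borel_measurable borel"
  shows "expectation (\<lambda>\<omega>. g (X \<omega>)) = expectation (\<lambda>\<omega>. g (Y \<omega>))"
  using integral_distr[of X M borel g] integral_distr[of Y M borel g] assms(1) by simp

lemma integrable_comp_iff_of_distr_eq:
  fixes X Y :: "'a \<Rightarrow> real" and g :: "real \<Rightarrow> real"
  assumes "distr M borel X = distr M borel Y"
    and [measurable]: "X \<in> borel_measurable M" "Y \<in> borel_measurable M" "g \<in> borel_measurable borel"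
  shows "integrable M (\<lambda>\<omega>. g (X \<omega>)) \<longleftrightarrow> integrable M (\<lambda>\<omega>. g (Y \<omega>))"
  using integrable_distr_eq[of X M borel g] integrable_distr_eq[of Y M borel g] assms(1) by simp

lemma prob_eq_of_distr_eq:
  fixes X Y :: "'a \<Rightarrow> real"
  assumes "distr M borel X = distr M borel Y"
    and [measurable]: "X \<in> borel_measurable M" "Y \<in> borel_measurable M" "A \<in> sets borel"
  shows "prob {\<omega>\<in>space M. X \<omega> \<in> A} = prob {\<omega>\<in>space M. Y \<omega> \<in> A}"
  using measure_distr[of X M borel A] measure_distr[of Y M borel A] assms(1)
  by (simp add: vimage_def Int_def conj_commute)

lemma distr_comp_eq_of_distr_eq:
  assumes "distr M borel X = distr M borel Y"
    and [measurable]: "X \<in> borel_measurable M" "Y \<in> borel_measurable M" "g \<in> borel_measurable borel"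
  shows "distr M borel (\<lambda>\<omega>. g (X \<omega>)) = distr M borel (\<lambda>\<omega>. g (Y \<omega>))"
  using distr_distr[of g borel borel X M] distr_distr[of g borel borel Y M] assms(1)
  by (simp add: comp_def)

end

text \<open>Etemadi's argument: truncate \<open>X i\<close> at level \<open>i + 1\<close>, apply Chebyshev's inequality and
  Borel--Cantelli along the subsequences \<open>geom_floor a\<close>, and interpolate by monotonicity.\<close>

locale pairwise_iid_nonneg = prob_space +
  fixes X :: "nat \<Rightarrow> 'a \<Rightarrow> real" and Y :: "'a \<Rightarrow> real"
  assumes measurable_X [measurable]: "\<And>i. X i \<in> borel_measurable M"
    and measurable_Y [measurable]: "Y \<in> borel_measurable M"
    and indep_X: "\<And>i j. i \<noteq> j \<Longrightarrow> indep_var borel (X i) borel (X j)"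
    and distr_X: "\<And>i. distr M borel (X i) = distr M borel Y"
    and integrable_Y: "integrable M Y"
    and X_nonneg: "\<And>i \<omega>. 0 \<le> X i \<omega>" and Y_nonneg: "\<And>\<omega>. 0 \<le> Y \<omega>"
begin

definition trunc_var :: "nat \<Rightarrow> 'a \<Rightarrow> real" where
  "trunc_var i \<omega> = trunc i (X i \<omega>)"

definition trunc_sum :: "nat \<Rightarrow> 'a \<Rightarrow> real" where
  "trunc_sum n \<omega> = (\<Sum>i<n. trunc_var i \<omega>)"

lemma measurable_trunc_var [measurable]: "trunc_var i \<in> borel_measurable M"
  unfolding trunc_var_def by measurable

lemma measurable_trunc_sum [measurable]: "trunc_sum n \<in> borel_measurable M"
  unfolding trunc_sum_def by measurable

lemma trunc_var_nonneg: "0 \<le> trunc_var i \<omega>"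
  and trunc_var_le: "trunc_var i \<omega> \<le> real (Suc i)"
  unfolding trunc_var_def trunc_def using X_nonneg[of i \<omega>] by auto

lemma trunc_sum_nonneg: "0 \<le> trunc_sum n \<omega>"
  unfolding trunc_sum_def by (intro sum_nonneg trunc_var_nonneg)

lemma mono_trunc_sum: "mono (\<lambda>n. trunc_sum n \<omega>)"
  unfolding mono_def trunc_sum_def by (auto intro!: sum_mono2 trunc_var_nonneg)

lemma integrable_trunc_var: "integrable M (trunc_var i)"
  using trunc_var_nonneg[of i] trunc_var_le[of i]
  by (intro integrable_const_bound[where B="real (Suc i)"]) auto

lemma integrable_trunc_var_square: "integrable M (\<lambda>\<omega>. trunc_var i \<omega>^2)"
  using trunc_var_nonneg[of i] trunc_var_le[of i]
  by (intro integrable_const_bound[where B="real (Suc i)^2"]) (auto intro!: power_mono)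

lemma expectation_trunc_var: "expectation (trunc_var i) = expectation (\<lambda>\<omega>. trunc i (Y \<omega>))"
  unfolding trunc_var_def by (rule integral_comp_eq_of_distr_eq[OF distr_X]) auto

lemma integrable_trunc_sum_square: "integrable M (\<lambda>\<omega>. trunc_sum n \<omega>^2)"
proof -
  have "trunc_sum n \<omega> \<le> real n * real n" for \<omega>
    unfolding trunc_sum_def using sum_bounded_above[of "{..<n}" "\<lambda>i. trunc_var i \<omega>" "real n"]
    by (smt (verit) card_lessThan lessThan_iff of_nat_Suc of_nat_le_iff trunc_var_le Suc_leI)
  then show ?thesis
    by (intro integrable_const_bound[where B="(real n * real n)^2"])
       (auto intro!: AE_I2 power_mono simp: trunc_sum_nonneg)
qed

lemma integrable_trunc_Y_square: "integrable M (\<lambda>\<omega>. trunc i (Y \<omega>)^2)"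
  using integrable_trunc_var_square[of i] unfolding trunc_var_def
  by (subst (asm) integrable_comp_iff_of_distr_eq[OF distr_X, where g="\<lambda>x. trunc i x^2"]) auto

text \<open>Borel--Cantelli: \<open>\<Sum>i P(X i > i + 1) \<le> E Y\<close>, so almost surely truncation eventually does nothing.\<close>

lemma AE_eventually_trunc_var_eq: "AE \<omega> in M. eventually (\<lambda>i. X i \<omega> = trunc_var i \<omega>) sequentially"
proof -
  define A where "A i = {\<omega>\<in>space M. real (Suc i) < X i \<omega>}" for i
  define B where "B i = {\<omega>\<in>space M. real (Suc i) < Y \<omega>}" for i
  have [measurable]: "A i \<in> sets M" "B i \<in> sets M" for i unfolding A_def B_def by measurable
  have prob_A: "prob (A i) = prob (B i)" for i
    unfolding A_def B_def using prob_eq_of_distr_eq[OF distr_X[of i], where A="{real (Suc i)<..}"] by simp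
  have "summable (\<lambda>i. prob (A i))"
  proof (rule summableI_nonneg_bounded)
    fix n
    have "(\<Sum>i<n. prob (A i)) = expectation (\<lambda>\<omega>. \<Sum>i<n. indicator (B i) \<omega>)"
      using prob_A by (subst Bochner_Integration.integral_sum) (auto simp: emeasure_finite less_top[symmetric])
    also have "\<dots> \<le> expectation Y"
    proof (rule integral_mono)
      fix \<omega> assume "\<omega> \<in> space M"
      then have "(\<Sum>i<n. indicator (B i) \<omega>) = (\<Sum>i<n. if real (Suc i) < Y \<omega> then 1 else (0::real))"
        unfolding B_def by (intro sum.cong) auto
      also have "\<dots> \<le> Y \<omega>" by (rule sum_count_Suc_less_le[OF Y_nonneg])
      finally show "(\<Sum>i<n. indicator (B i) \<omega>) \<le> Y \<omega>" .
    qed (auto intro!: integrable_Y integrable_sum integrable_real_indicator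
              simp: emeasure_finite less_top[symmetric])
    finally show "(\<Sum>i<n. prob (A i)) \<le> expectation Y" .
  qed auto
  then have "AE \<omega> in M. eventually (\<lambda>i. \<omega> \<in> space M - A i) sequentially"
    by (intro borel_cantelli_AE1) (auto simp: emeasure_finite less_top[symmetric])
  then show ?thesis
    by (rule AE_mp) (auto intro!: AE_I2 elim!: eventually_mono simp: A_def trunc_var_def trunc_def)
qed

lemma AE_trunc_error_avg_tendsto_0:
  "AE \<omega> in M. (\<lambda>n. ((\<Sum>i<n. X i \<omega>) - trunc_sum n \<omega>) / real n) \<longlonglongrightarrow> 0"
  using AE_eventually_trunc_var_eq
proof (rule AE_mp, intro AE_I2 impI)
  fix \<omega> assume "eventually (\<lambda>i. X i \<omega> = trunc_var i \<omega>) sequentially"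
  then obtain N where N: "\<And>i. N \<le> i \<Longrightarrow> X i \<omega> = trunc_var i \<omega>"
    unfolding eventually_sequentially by auto
  define c where "c = (\<Sum>i<N. X i \<omega> - trunc_var i \<omega>)"
  have "\<forall>\<^sub>F n in sequentially. c / real n = ((\<Sum>i<n. X i \<omega>) - trunc_sum n \<omega>) / real n"
    using eventually_ge_at_top[of N]
  proof eventually_elim
    case (elim n)
    have "(\<Sum>i<n. X i \<omega>) - trunc_sum n \<omega> = (\<Sum>i<n. X i \<omega> - trunc_var i \<omega>)"
      unfolding trunc_sum_def by (simp add: sum_subtractf)
    also have "\<dots> = c"
      unfolding c_def by (rule sum.mono_neutral_right) (use elim N in auto)
    finally show ?case by simp
  qed
  then show "(\<lambda>n. ((\<Sum>i<n. X i \<omega>) - trunc_sum n \<omega>) / real n) \<longlonglongrightarrow> 0"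
    by (rule Lim_transform_eventually[OF lim_const_over_n])
qed

lemma trunc_sum_mean_avg_tendsto:
  "(\<lambda>n. expectation (trunc_sum n) / real n) \<longlonglongrightarrow> expectation Y"
proof -
  have "(\<lambda>i. expectation (\<lambda>\<omega>. trunc i (Y \<omega>))) \<longlonglongrightarrow> expectation Y"
  proof (rule integral_dominated_convergence[where w=Y])
    show "AE \<omega> in M. (\<lambda>i. trunc i (Y \<omega>)) \<longlonglongrightarrow> Y \<omega>"
    proof (intro AE_I2 tendsto_eventually)
      fix \<omega>
      obtain N :: nat where "Y \<omega> \<le> real N" using real_arch_simple by blast
      then show "eventually (\<lambda>i. trunc i (Y \<omega>) = Y \<omega>) sequentially"
        unfolding eventually_sequentially trunc_def by (intro exI[of _ N]) auto
    qed
  qed (use Y_nonneg in \<open>auto simp: trunc_def integrable_Y\<close>)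
  then have "(\<lambda>n. (\<Sum>i<n. expectation (\<lambda>\<omega>. trunc i (Y \<omega>))) / real n) \<longlonglongrightarrow> expectation Y"
    by (rule cesaro_mean_tendsto)
  moreover have "expectation (trunc_sum n) = (\<Sum>i<n. expectation (\<lambda>\<omega>. trunc i (Y \<omega>)))" for n
    unfolding trunc_sum_def
    by (simp add: Bochner_Integration.integral_sum integrable_trunc_var expectation_trunc_var)
  ultimately show ?thesis by simp
qed

text \<open>Pairwise independence suffices here: the cross terms of the variance vanish.\<close>

lemma variance_trunc_sum_le:
  "expectation (\<lambda>\<omega>. (trunc_sum n \<omega> - expectation (trunc_sum n))^2)
     \<le> (\<Sum>i<n. expectation (\<lambda>\<omega>. trunc i (Y \<omega>)^2))"
proof -
  define Z where "Z i \<omega> = trunc_var i \<omega> - expectation (trunc_var i)" for i \<omega>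
  have [measurable]: "Z i \<in> borel_measurable M" for i unfolding Z_def by measurable
  have integrable_Z: "integrable M (Z i)" for i
    unfolding Z_def using integrable_trunc_var by auto
  have "0 \<le> expectation (trunc_var i)" "expectation (trunc_var i) \<le> real (Suc i)" for i
    using integral_mono[OF integrable_trunc_var _ trunc_var_le, of i] prob_space
    by (auto intro: Bochner_Integration.integral_nonneg trunc_var_nonneg)
  then have Z_bound: "\<bar>Z i \<omega>\<bar> \<le> real (Suc i)" for i \<omega>
    using trunc_var_nonneg[of i \<omega>] trunc_var_le[of i \<omega>] unfolding Z_def by (smt (verit))
  have integrable_ZZ: "integrable M (\<lambda>\<omega>. Z i \<omega> * Z j \<omega>)" for i j
    using Z_bound by (intro integrable_const_bound[where B="real (Suc i) * real (Suc j)"])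
      (auto simp: abs_mult intro!: mult_mono)
  have cross: "expectation (\<lambda>\<omega>. Z i \<omega> * Z j \<omega>) = 0" if "i \<noteq> j" for i j
  proof -
    have "indep_var borel ((\<lambda>x. trunc i x - expectation (trunc_var i)) \<circ> X i)
                    borel ((\<lambda>x. trunc j x - expectation (trunc_var j)) \<circ> X j)"
      by (rule indep_var_compose[OF indep_X[OF that]]) auto
    then have "indep_var borel (Z i) borel (Z j)"
      by (simp add: comp_def Z_def[abs_def] trunc_var_def)
    then show ?thesis
      using indep_var_lebesgue_integral[OF _ integrable_Z integrable_Z] integrable_trunc_var
      by (simp add: Z_def prob_space)
  qed
  have "trunc_sum n \<omega> - expectation (trunc_sum n) = (\<Sum>i<n. Z i \<omega>)" for \<omega>
    unfolding trunc_sum_def Z_def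
    by (simp add: Bochner_Integration.integral_sum integrable_trunc_var sum_subtractf)
  then have "expectation (\<lambda>\<omega>. (trunc_sum n \<omega> - expectation (trunc_sum n))^2)
      = (\<Sum>i<n. \<Sum>j<n. expectation (\<lambda>\<omega>. Z i \<omega> * Z j \<omega>))"
    using integrable_ZZ
    by (simp add: power2_eq_square sum_product Bochner_Integration.integral_sum integrable_sum)
  also have "\<dots> = (\<Sum>i<n. expectation (\<lambda>\<omega>. Z i \<omega> * Z i \<omega>))"
    by (intro sum.cong refl, subst sum.remove[of _ i for i]) (auto intro!: sum.neutral cross)
  also have "\<dots> \<le> (\<Sum>i<n. expectation (\<lambda>\<omega>. trunc i (Y \<omega>)^2))"
  proof (rule sum_mono)
    fix i
    have "expectation (\<lambda>\<omega>. Z i \<omega> * Z i \<omega>)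
        = expectation (\<lambda>\<omega>. trunc_var i \<omega>^2) - expectation (trunc_var i)^2"
      unfolding Z_def power2_eq_square[symmetric]
      by (rule variance_eq[OF integrable_trunc_var integrable_trunc_var_square])
    also have "\<dots> \<le> expectation (\<lambda>\<omega>. trunc_var i \<omega>^2)" by simp
    also have "\<dots> = expectation (\<lambda>\<omega>. trunc i (Y \<omega>)^2)"
      unfolding trunc_var_def by (rule integral_comp_eq_of_distr_eq[OF distr_X]) auto
    finally show "expectation (\<lambda>\<omega>. Z i \<omega> * Z i \<omega>) \<le> expectation (\<lambda>\<omega>. trunc i (Y \<omega>)^2)" .
  qed
  finally show ?thesis .
qed

lemma prob_trunc_sum_deviation_le:
  assumes "0 < \<epsilon>" "1 \<le> n"
  shows "prob {\<omega>\<in>space M. \<epsilon> * real n \<le> \<bar>trunc_sum n \<omega> - expectation (trunc_sum n)\<bar>}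
           \<le> (\<Sum>i<n. expectation (\<lambda>\<omega>. trunc i (Y \<omega>)^2)) / (\<epsilon> * real n)^2"
proof -
  have "prob {\<omega>\<in>space M. \<epsilon> * real n \<le> \<bar>trunc_sum n \<omega> - expectation (trunc_sum n)\<bar>}
          \<le> expectation (\<lambda>\<omega>. (trunc_sum n \<omega> - expectation (trunc_sum n))^2) / (\<epsilon> * real n)^2"
    using assms by (intro Chebyshev_inequality integrable_trunc_sum_square) auto
  also have "\<dots> \<le> (\<Sum>i<n. expectation (\<lambda>\<omega>. trunc i (Y \<omega>)^2)) / (\<epsilon> * real n)^2"
    by (intro divide_right_mono variance_trunc_sum_le) auto
  finally show ?thesis .
qed

lemma sum_expectation_trunc_square_le:
  "(\<Sum>i<K. expectation (\<lambda>\<omega>. trunc i (Y \<omega>)^2) / real (Suc i)^2) \<le> 2 * expectation Y"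
proof -
  have "(\<Sum>i<K. expectation (\<lambda>\<omega>. trunc i (Y \<omega>)^2) / real (Suc i)^2)
      = expectation (\<lambda>\<omega>. \<Sum>i<K. trunc i (Y \<omega>)^2 / real (Suc i)^2)"
    by (subst Bochner_Integration.integral_sum) (auto intro: integrable_trunc_Y_square)
  also have "\<dots> \<le> expectation (\<lambda>\<omega>. 2 * Y \<omega>)"
    by (intro integral_mono sum_trunc_square_le Y_nonneg)
       (auto intro!: integrable_Y integrable_trunc_Y_square simp del: of_nat_Suc)
  finally show ?thesis by simp
qed

lemma summable_prob_trunc_sum_deviation:
  assumes a: "1 < a" and \<epsilon>: "0 < \<epsilon>"
  shows "summable (\<lambda>k. prob {\<omega>\<in>space M. \<epsilon> * real (geom_floor a k)
                         \<le> \<bar>trunc_sum (geom_floor a k) \<omega> - expectation (trunc_sum (geom_floor a k))\<bar>})"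
proof (rule summableI_nonneg_bounded)
  fix N
  define g where "g = geom_floor a"
  define K where "K = g N"
  define C where "C = 4 / (1 - 1/a^2)"
  define q where "q i = expectation (\<lambda>\<omega>. trunc i (Y \<omega>)^2)" for i
  have q: "0 \<le> q i" for i unfolding q_def by (intro Bochner_Integration.integral_nonneg) auto
  have "1 / a^2 < 1" using a by (simp add: divide_less_eq_1 one_less_power)
  then have C: "0 \<le> C" unfolding C_def by simp
  have g: "1 \<le> g k" "k < N \<Longrightarrow> g k \<le> K" for k
    unfolding g_def K_def using geom_floor_ge_1[OF a] geom_floor_mono[OF a] by auto
  have "(\<Sum>k<N. prob {\<omega>\<in>space M. \<epsilon> * real (g k) \<le> \<bar>trunc_sum (g k) \<omega> - expectation (trunc_sum (g k))\<bar>})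
      \<le> (\<Sum>k<N. (\<Sum>i<g k. q i) / (\<epsilon> * real (g k))^2)"
    unfolding q_def using g(1) \<epsilon> by (intro sum_mono prob_trunc_sum_deviation_le) auto
  also have "\<dots> = (\<Sum>k<N. \<Sum>i<K. if i < g k then q i / real (g k)^2 else 0) / \<epsilon>^2"
  proof -
    have "(\<Sum>i<K. if i < g k then q i / real (g k)^2 else 0) = (\<Sum>i<g k. q i) / real (g k)^2"
      if "k < N" for k
    proof -
      have "{i\<in>{..<K}. i < g k} = {..<g k}" using g(2)[OF that] by auto
      then show ?thesis by (simp add: sum.inter_filter[symmetric] sum_divide_distrib)
    qed
    then show ?thesis by (simp add: sum_divide_distrib power_mult_distrib mult.commute)
  qed
  also have "\<dots> = (\<Sum>i<K. q i * (\<Sum>k<N. if i < g k then 1 / real (g k)^2 else 0)) / \<epsilon>^2"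
    by (subst sum.swap) (auto simp: sum_distrib_left intro!: sum.cong)
  also have "\<dots> \<le> (\<Sum>i<K. q i * (C / real (Suc i)^2)) / \<epsilon>^2"
    unfolding C_def g_def using sum_inverse_square_geom_floor_le[OF a] q
    by (intro divide_right_mono sum_mono mult_left_mono) auto
  also have "\<dots> = C * (\<Sum>i<K. q i / real (Suc i)^2) / \<epsilon>^2"
    by (simp add: sum_distrib_left mult_ac)
  also have "\<dots> \<le> C * (2 * expectation Y) / \<epsilon>^2"
    unfolding q_def using C sum_expectation_trunc_square_le by (intro divide_right_mono mult_left_mono) auto
  finally show "(\<Sum>k<N. prob {\<omega>\<in>space M. \<epsilon> * real (geom_floor a k)
      \<le> \<bar>trunc_sum (geom_floor a k) \<omega> - expectation (trunc_sum (geom_floor a k))\<bar>})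
      \<le> C * (2 * expectation Y) / \<epsilon>^2"
    unfolding g_def .
qed auto

lemma AE_trunc_sum_deviation_tendsto_0:
  assumes a: "1 < a"
  shows "AE \<omega> in M. (\<lambda>k. (trunc_sum (geom_floor a k) \<omega> - expectation (trunc_sum (geom_floor a k)))
                         / real (geom_floor a k)) \<longlonglongrightarrow> 0"
proof -
  define g where "g = geom_floor a"
  define B where "B l k = {\<omega>\<in>space M. (1 / real (Suc l)) * real (g k)
                            \<le> \<bar>trunc_sum (g k) \<omega> - expectation (trunc_sum (g k))\<bar>}" for l k
  have "AE \<omega> in M. \<forall>l. eventually (\<lambda>k. \<omega> \<in> space M - B l k) sequentially"
    unfolding AE_all_countable
  proof
    fix l show "AE \<omega> in M. eventually (\<lambda>k. \<omega> \<in> space M - B l k) sequentially"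
      unfolding B_def g_def
      by (rule borel_cantelli_AE1)
         (use summable_prob_trunc_sum_deviation[OF a, of "1 / real (Suc l)"] in
          \<open>auto simp: emeasure_finite less_top[symmetric]\<close>)
  qed
  then show ?thesis
  proof (rule AE_mp, intro AE_I2 impI)
    fix \<omega> assume \<omega>: "\<omega> \<in> space M" and ev: "\<forall>l. eventually (\<lambda>k. \<omega> \<in> space M - B l k) sequentially"
    show "(\<lambda>k. (trunc_sum (geom_floor a k) \<omega> - expectation (trunc_sum (geom_floor a k)))
               / real (geom_floor a k)) \<longlonglongrightarrow> 0"
      unfolding g_def[symmetric]
    proof (rule LIMSEQ_I)
      fix r :: real assume "0 < r"
      then obtain l where l: "1 / real (Suc l) < r" using reals_Archimedean by (auto simp: inverse_eq_divide)
      from ev[rule_format, of l] obtain K where K: "\<And>k. K \<le> k \<Longrightarrow> \<omega> \<in> space M - B l k"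
        unfolding eventually_sequentially by blast
      have "\<bar>trunc_sum (g k) \<omega> - expectation (trunc_sum (g k))\<bar> / real (g k) < r" if "K \<le> k" for k
      proof -
        have "\<bar>trunc_sum (g k) \<omega> - expectation (trunc_sum (g k))\<bar> < (1 / real (Suc l)) * real (g k)"
          using K[OF that] \<omega> unfolding B_def by auto
        moreover have "0 < real (g k)" using geom_floor_ge_1[OF a, of k] unfolding g_def by simp
        ultimately have "\<bar>trunc_sum (g k) \<omega> - expectation (trunc_sum (g k))\<bar> / real (g k) < 1 / real (Suc l)"
          by (simp add: divide_less_eq)
        then show ?thesis using l by linarith
      qed
      then show "\<exists>K. \<forall>k\<ge>K. norm ((trunc_sum (g k) \<omega> - expectation (trunc_sum (g k))) / real (g k) - 0) < r"
        by auto
    qed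
  qed
qed

lemma AE_trunc_sum_avg_tendsto_geom_floor:
  assumes a: "1 < a"
  shows "AE \<omega> in M. (\<lambda>k. trunc_sum (geom_floor a k) \<omega> / real (geom_floor a k)) \<longlonglongrightarrow> expectation Y"
  using AE_trunc_sum_deviation_tendsto_0[OF a]
proof eventually_elim
  case (elim \<omega>)
  have "(\<lambda>k. expectation (trunc_sum (geom_floor a k)) / real (geom_floor a k)) \<longlonglongrightarrow> expectation Y"
    using filterlim_compose[OF trunc_sum_mean_avg_tendsto filterlim_geom_floor[OF a]] by simp
  from tendsto_add[OF elim this] show ?case
    by (simp add: diff_divide_distrib)
qed

theorem AE_avg_tendsto_expectation:
  "AE \<omega> in M. (\<lambda>n. (\<Sum>i<n. X i \<omega>) / real n) \<longlonglongrightarrow> expectation Y"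
proof -
  have "AE \<omega> in M. \<forall>j. (\<lambda>k. trunc_sum (geom_floor (1 + 1 / real (Suc j)) k) \<omega>
                            / real (geom_floor (1 + 1 / real (Suc j)) k)) \<longlonglongrightarrow> expectation Y"
    unfolding AE_all_countable by (intro allI AE_trunc_sum_avg_tendsto_geom_floor) simp
  then have "AE \<omega> in M. (\<lambda>n. trunc_sum n \<omega> / real n) \<longlonglongrightarrow> expectation Y"
    by (rule AE_mp) (auto intro!: avg_tendsto_of_geom_floor mono_trunc_sum trunc_sum_nonneg)
  with AE_trunc_error_avg_tendsto_0 show ?thesis
  proof (rule AE_mp[OF _ AE_mp], intro AE_I2 impI)
    fix \<omega>
    assume "(\<lambda>n. ((\<Sum>i<n. X i \<omega>) - trunc_sum n \<omega>) / real n) \<longlonglongrightarrow> 0"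
      and "(\<lambda>n. trunc_sum n \<omega> / real n) \<longlonglongrightarrow> expectation Y"
    then have "(\<lambda>n. ((\<Sum>i<n. X i \<omega>) - trunc_sum n \<omega>) / real n + trunc_sum n \<omega> / real n)
                 \<longlonglongrightarrow> 0 + expectation Y"
      by (rule tendsto_add)
    then show "(\<lambda>n. (\<Sum>i<n. X i \<omega>) / real n) \<longlonglongrightarrow> expectation Y"
      by (simp add: diff_divide_distrib)
  qed
qed

end

context prob_space
begin

lemma AE_avg_comp_tendsto_of_nonneg:
  fixes X :: "nat \<Rightarrow> 'a \<Rightarrow> real" and Y :: "'a \<Rightarrow> real" and g :: "real \<Rightarrow> real"
  assumes [measurable]: "\<And>i. X i \<in> borel_measurable M" "Y \<in> borel_measurable M" "g \<in> borel_measurable borel"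
    and indep: "\<And>i j. i \<noteq> j \<Longrightarrow> indep_var borel (X i) borel (X j)"
    and distr: "\<And>i. distr M borel (X i) = distr M borel Y"
    and integrable: "integrable M (\<lambda>\<omega>. g (Y \<omega>))"
    and nonneg: "\<And>x. 0 \<le> g x"
  shows "AE \<omega> in M. (\<lambda>n. (\<Sum>i<n. g (X i \<omega>)) / real n) \<longlonglongrightarrow> expectation (\<lambda>\<omega>. g (Y \<omega>))"
proof -
  interpret pairwise_iid_nonneg M "\<lambda>i \<omega>. g (X i \<omega>)" "\<lambda>\<omega>. g (Y \<omega>)"
  proof
    show "indep_var borel (\<lambda>\<omega>. g (X i \<omega>)) borel (\<lambda>\<omega>. g (X j \<omega>))" if "i \<noteq> j" for i j
      using indep_var_compose[OF indep[OF that], of g borel g borel] by (simp add: comp_def)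
  qed (auto intro: integrable nonneg distr_comp_eq_of_distr_eq[OF distr])
  show ?thesis by (rule AE_avg_tendsto_expectation)
qed

theorem strong_law_pairwise_iid:
  fixes X :: "nat \<Rightarrow> 'a \<Rightarrow> real" and Y :: "'a \<Rightarrow> real"
  assumes [measurable]: "\<And>i. X i \<in> borel_measurable M" "Y \<in> borel_measurable M"
    and indep: "\<And>i j. i \<noteq> j \<Longrightarrow> indep_var borel (X i) borel (X j)"
    and distr: "\<And>i. distr M borel (X i) = distr M borel Y"
    and integrable: "integrable M Y"
  shows "AE \<omega> in M. (\<lambda>n. (\<Sum>i<n. X i \<omega>) / real n) \<longlonglongrightarrow> expectation Y"
proof -
  have integrable_parts: "integrable M (\<lambda>\<omega>. max (Y \<omega>) 0)" "integrable M (\<lambda>\<omega>. max (- Y \<omega>) 0)"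
    by (auto intro!: Bochner_Integration.integrable_bound[OF integrable])
  have pos: "AE \<omega> in M. (\<lambda>n. (\<Sum>i<n. max (X i \<omega>) 0) / real n) \<longlonglongrightarrow> expectation (\<lambda>\<omega>. max (Y \<omega>) 0)"
    by (rule AE_avg_comp_tendsto_of_nonneg[OF _ _ _ indep distr integrable_parts(1)]) auto
  have neg: "AE \<omega> in M. (\<lambda>n. (\<Sum>i<n. max (- X i \<omega>) 0) / real n) \<longlonglongrightarrow> expectation (\<lambda>\<omega>. max (- Y \<omega>) 0)"
    by (rule AE_avg_comp_tendsto_of_nonneg[OF _ _ _ indep distr integrable_parts(2)]) auto
  have expectation_eq: "expectation Y = expectation (\<lambda>\<omega>. max (Y \<omega>) 0) - expectation (\<lambda>\<omega>. max (- Y \<omega>) 0)"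
    by (subst Bochner_Integration.integral_diff[symmetric])
       (auto intro!: integrable_parts Bochner_Integration.integral_cong)
  have avg_eq: "(\<Sum>i<n. X i \<omega>) / real n
      = (\<Sum>i<n. max (X i \<omega>) 0) / real n - (\<Sum>i<n. max (- X i \<omega>) 0) / real n" for n \<omega>
  proof -
    have "max x 0 - max (- x) 0 = x" for x :: real by auto
    then show ?thesis by (simp add: diff_divide_distrib[symmetric] sum_subtractf[symmetric])
  qed
  show ?thesis
    using pos neg by eventually_elim (simp add: avg_eq expectation_eq tendsto_diff)
qed

corollary strong_law_pairwise_iid_vec:
  fixes X :: "nat \<Rightarrow> 'a \<Rightarrow> real^'h::finite" and Y :: "'a \<Rightarrow> real^'h"
  assumes [measurable]: "\<And>i. X i \<in> borel_measurable M" "Y \<in> borel_measurable M"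
    and indep: "\<And>i j. i \<noteq> j \<Longrightarrow> indep_var borel (X i) borel (X j)"
    and distr: "\<And>i. distr M borel (X i) = distr M borel Y"
    and integrable: "integrable M Y"
  shows "AE \<omega> in M. (\<lambda>n. (1 / real n) *\<^sub>R (\<Sum>i<n. X i \<omega>)) \<longlonglongrightarrow> expectation Y"
proof -
  have "AE \<omega> in M. (\<lambda>n. (\<Sum>i<n. X i \<omega> $ c) / real n) \<longlonglongrightarrow> expectation Y $ c" for c
  proof -
    have "AE \<omega> in M. (\<lambda>n. (\<Sum>i<n. X i \<omega> $ c) / real n) \<longlonglongrightarrow> expectation (\<lambda>\<omega>. Y \<omega> $ c)"
    proof (rule strong_law_pairwise_iid)
      show "indep_var borel (\<lambda>\<omega>. X i \<omega> $ c) borel (\<lambda>\<omega>. X j \<omega> $ c)" if "i \<noteq> j" for i j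
        using indep_var_compose[OF indep[OF that], of "\<lambda>x. x $ c" borel "\<lambda>x. x $ c" borel]
        by (simp add: comp_def)
      show "distr M borel (\<lambda>\<omega>. X i \<omega> $ c) = distr M borel (\<lambda>\<omega>. Y \<omega> $ c)" for i
        by (rule distr_comp_eq_of_distr_eq[OF distr]) auto
    qed (auto intro: integrable_bounded_linear[OF bounded_linear_vec_nth integrable]
                     measurable_compose[OF _ borel_measurable_nth])
    then show ?thesis
      by (simp add: integral_bounded_linear[OF bounded_linear_vec_nth integrable])
  qed
  then have "AE \<omega> in M. \<forall>c\<in>UNIV. (\<lambda>n. (\<Sum>i<n. X i \<omega> $ c) / real n) \<longlonglongrightarrow> expectation Y $ c"
    by (intro AE_finite_allI) auto
  then show ?thesis
    by eventually_elim (auto intro: vec_tendstoI)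
qed

lemma indep_var_of_indep_vars:
  assumes "indep_vars (\<lambda>_. N) F I" "i \<in> I" "j \<in> I" "i \<noteq> j"
  shows "indep_var N (F i) N (F j)"
proof -
  have "indep_var (PiM {i} (\<lambda>_. N)) (\<lambda>\<omega>. restrict (\<lambda>k. F k \<omega>) {i})
                  (PiM {j} (\<lambda>_. N)) (\<lambda>\<omega>. restrict (\<lambda>k. F k \<omega>) {j})"
    using assms by (intro indep_var_restrict) auto
  then have "indep_var N ((\<lambda>f. f i) \<circ> (\<lambda>\<omega>. restrict (\<lambda>k. F k \<omega>) {i}))
                       N ((\<lambda>f. f j) \<circ> (\<lambda>\<omega>. restrict (\<lambda>k. F k \<omega>) {j}))"
    by (rule indep_var_compose) (auto intro: measurable_component_singleton)
  then show ?thesis by (simp add: comp_def)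
qed

end

section \<open>Averages over lattice boxes\<close>

lemma nested_finite_sets_enumeration:
  fixes C :: "nat \<Rightarrow> 'b set"
  assumes finite: "\<And>j. finite (C j)" and nested: "\<And>j. C j \<subseteq> C (Suc j)" and "C 0 = {}"
    and unbounded: "\<And>n. \<exists>j. n < card (C j)"
  obtains e where "inj e" "\<And>j. e ` {..<card (C j)} = C j"
proof -
  define c where "c j = card (C j)" for j
  have "mono c"
    unfolding mono_iff_le_Suc c_def using finite nested by (auto intro: card_mono)
  have "\<exists>f. bij_betw f {c j..<c (Suc j)} (C (Suc j) - C j)" for j
    using finite nested by (intro finite_same_card_bij) (auto simp: c_def card_Diff_subset)
  then obtain f where f: "\<And>j. bij_betw (f j) {c j..<c (Suc j)} (C (Suc j) - C j)"
    by metis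
  define layer where "layer n = (LEAST j. n < c (Suc j))" for n
  have layer: "layer n = j" if "c j \<le> n" "n < c (Suc j)" for n j
    unfolding layer_def
  proof (rule Least_equality)
    show "j \<le> i" if "n < c (Suc i)" for i
      using \<open>mono c\<close> \<open>c j \<le> n\<close> that by (metis monoD not_less_eq_eq order.trans leD)
  qed fact
  define e where "e n = f (layer n) n" for n
  have bij: "bij_betw e {..<c j} (C j)" for j
  proof (induction j)
    case 0
    then show ?case using \<open>C 0 = {}\<close> by (simp add: c_def bij_betw_def)
  next
    case (Suc j)
    have "bij_betw e {c j..<c (Suc j)} (C (Suc j) - C j)"
      using f[of j] by (rule bij_betw_cong[THEN iffD1, rotated]) (auto simp: e_def layer)
    with Suc.IH have "bij_betw e ({..<c j} \<union> {c j..<c (Suc j)}) (C j \<union> (C (Suc j) - C j))"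
      by (rule bij_betw_combine) auto
    moreover have "{..<c j} \<union> {c j..<c (Suc j)} = {..<c (Suc j)}"
      using monoD[OF \<open>mono c\<close>, of j "Suc j"] by auto
    ultimately show ?case using nested[of j] by (simp add: Un_absorb1)
  qed
  have "inj e"
  proof (rule injI)
    fix x y assume "e x = e y"
    obtain j where "max x y < c j" using unbounded unfolding c_def by blast
    then show "x = y" using bij_betw_imp_inj_on[OF bij[of j]] \<open>e x = e y\<close> by (auto dest: inj_onD)
  qed
  then show ?thesis using that bij by (auto simp: bij_betw_def c_def)
qed

lemma zbox_eq_image: "zbox m = vec_lambda ` (PiE UNIV (\<lambda>_. {- int m..int m}))"
proof
  show "zbox m \<subseteq> vec_lambda ` (PiE UNIV (\<lambda>_. {- int m..int m}))"
  proof
    fix z assume "z \<in> zbox m"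
    then have "vec_nth z \<in> PiE UNIV (\<lambda>_. {- int m..int m})"
      unfolding zbox_def by (auto simp: PiE_iff abs_le_iff minus_le_iff)
    then show "z \<in> vec_lambda ` (PiE UNIV (\<lambda>_. {- int m..int m}))"
      by (metis image_eqI vec_nth_inverse)
  qed
  show "vec_lambda ` (PiE UNIV (\<lambda>_. {- int m..int m})) \<subseteq> zbox m"
    unfolding zbox_def by (auto simp: PiE_iff abs_le_iff minus_le_iff)
qed

lemma card_zbox: "card (zbox m :: (int^'d::finite) set) = (2*m+1)^CARD('d)"
proof -
  have "inj_on (vec_lambda :: ('d \<Rightarrow> int) \<Rightarrow> int^'d) (PiE UNIV (\<lambda>_. {- int m..int m}))"
    by (auto simp: inj_on_def)
  then have "card (zbox m :: (int^'d) set) = card (PiE (UNIV :: 'd set) (\<lambda>_. {- int m..int m}))"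
    unfolding zbox_eq_image by (rule card_image)
  also have "\<dots> = (2*m+1)^CARD('d)"
    using card_PiE[of "UNIV :: 'd set" "\<lambda>_. {- int m..int m}"] by (simp add: nat_add_distrib nat_mult_distrib)
  finally show ?thesis .
qed

lemma finite_zbox: "finite (zbox m :: (int^'d::finite) set)"
  unfolding zbox_eq_image by (intro finite_imageI finite_PiE) auto

lemma zbox_mono: "m \<le> m' \<Longrightarrow> zbox m \<subseteq> zbox m'"
  unfolding zbox_def by (auto intro: order.trans)

lemma zbox_enumeration:
  obtains e :: "nat \<Rightarrow> int^'d::finite"
  where "inj e" "\<And>m. e ` {..<(2*m+1)^CARD('d)} = zbox m"
proof -
  define C :: "nat \<Rightarrow> (int^'d) set" where "C j = (case j of 0 \<Rightarrow> {} | Suc m \<Rightarrow> zbox m)" for j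
  have card_C: "card (C (Suc m)) = (2*m+1)^CARD('d)" for m
    by (simp add: C_def card_zbox)
  obtain e where "inj e" "\<And>j. e ` {..<card (C j)} = C j"
  proof (rule nested_finite_sets_enumeration)
    show "finite (C j)" "C j \<subseteq> C (Suc j)" for j
      by (auto simp: C_def finite_zbox zbox_mono split: nat.split)
    show "\<exists>j. n < card (C j)" for n
      using self_le_power[of "2*n+1" "CARD('d)"] card_C[of n] by (intro exI[of _ "Suc n"]) auto
  qed (auto simp: C_def)
  then show ?thesis using that card_C by (metis C_def nat.case(2))
qed

lemma (in prob_space) AE_zbox_average_tendsto:
  fixes F :: "int^'d::finite \<Rightarrow> 'a \<Rightarrow> real^'h::finite" and G :: "'a \<Rightarrow> real^'h"
  assumes [measurable]: "\<And>z. F z \<in> borel_measurable M" "G \<in> borel_measurable M"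
    and indep: "indep_vars (\<lambda>_. borel) F UNIV"
    and distr: "\<And>z. distr M borel (F z) = distr M borel G"
    and integrable: "integrable M G"
  shows "AE \<omega> in M. (\<lambda>m. (1 / real ((2*m+1)^CARD('d))) *\<^sub>R (\<Sum>z\<in>zbox m. F z \<omega>)) \<longlonglongrightarrow> expectation G"
proof -
  obtain e :: "nat \<Rightarrow> int^'d" where e: "inj e" "\<And>m. e ` {..<(2*m+1)^CARD('d)} = zbox m"
    using zbox_enumeration by blast
  define N :: "nat \<Rightarrow> nat" where "N m = (2*m+1)^CARD('d)" for m
  have "m \<le> N m" for m
    unfolding N_def using self_le_power[of "2*m+1" "CARD('d)"] by simp
  then have N: "filterlim N at_top sequentially"
    by (intro filterlim_at_top_mono[OF filterlim_ident]) auto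
  have reindex: "(\<Sum>z\<in>zbox m. F z \<omega>) = (\<Sum>i<N m. F (e i) \<omega>)" for m \<omega>
    unfolding e(2)[of m, symmetric] N_def using e(1) by (subst sum.reindex) (auto intro: inj_on_subset)
  have "AE \<omega> in M. (\<lambda>n. (1 / real n) *\<^sub>R (\<Sum>i<n. F (e i) \<omega>)) \<longlonglongrightarrow> expectation G"
    using e(1) by (intro strong_law_pairwise_iid_vec indep_var_of_indep_vars[OF indep] distr integrable)
                  (auto dest: injD)
  then show ?thesis
  proof eventually_elim
    case (elim \<omega>)
    from filterlim_compose[OF elim N] show ?case by (simp add: reindex N_def)
  qed
qed

lemma (in prob_space) AE_copies_zbox_average_tendsto:
  fixes S :: "nat \<Rightarrow> 'a \<Rightarrow> real^'h::finite" and Sc :: "nat \<Rightarrow> int^'d::finite \<Rightarrow> 'a \<Rightarrow> real^'h"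
  assumes copies: "\<forall>n\<ge>1. (\<forall>z. Sc n z \<in> borel_measurable M \<and> distr M borel (Sc n z) = distr M borel (S n))
                            \<and> indep_vars (\<lambda>_. borel) (Sc n) UNIV"
    and integrable: "\<forall>n\<ge>1. integrable M (S n)"
  shows "AE \<omega> in M. \<forall>n\<ge>1. (\<lambda>m. (1 / real ((2*m+1)^CARD('d))) *\<^sub>R (\<Sum>z\<in>zbox m. Sc n z \<omega>))
                              \<longlonglongrightarrow> expectation (S n)"
  unfolding AE_all_countable
proof
  fix n
  show "AE \<omega> in M. 1 \<le> n \<longrightarrow> (\<lambda>m. (1 / real ((2*m+1)^CARD('d))) *\<^sub>R (\<Sum>z\<in>zbox m. Sc n z \<omega>))
                                  \<longlonglongrightarrow> expectation (S n)"
  proof (cases "1 \<le> n")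
    case True
    then show ?thesis
      using copies integrable AE_zbox_average_tendsto[of "Sc n" "S n"] by simp
  qed simp
qed

section \<open>Block decomposition\<close>

lemma mblock_bounds:
  assumes k: "1 \<le> k" and n: "k \<le> n"
  shows "(2 * mblock k n + 1) * k \<le> n \<and> n < (2 * mblock k n + 3) * k"
proof -
  define P where "P m \<longleftrightarrow> (2*m+1)*k \<le> n \<and> n < (2*m+3)*k" for m
  define q where "q = n div k"
  define m0 where "m0 = (q - 1) div 2"
  have q: "1 \<le> q" "q * k \<le> n" "n < (q + 1) * k"
    using k n dividend_less_div_times[of k n] div_times_less_eq_dividend[of n k]
    unfolding q_def by (auto simp: div_greater_zero_iff Suc_le_eq)
  have "2*m0+1 \<le> q" "q \<le> 2*m0+2" unfolding m0_def using q(1) by auto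
  then have "(2*m0+1)*k \<le> q*k" "(q+1)*k \<le> (2*m0+3)*k" by (intro mult_le_mono1; linarith)+
  then have "P m0" unfolding P_def using q by linarith
  moreover have "m = m0" if "P m" for m
  proof (rule ccontr)
    assume "m \<noteq> m0"
    then have "(2 * min m m0 + 3) * k \<le> (2 * max m m0 + 1) * k" by (intro mult_le_mono1) auto
    then show False using that \<open>P m0\<close> unfolding P_def by (cases "m \<le> m0") (auto simp: min_def max_def)
  qed
  ultimately have "mblock k n = m0"
    unfolding mblock_def P_def[symmetric] by (rule the_equality)
  then show ?thesis using \<open>P m0\<close> unfolding P_def by simp
qed

lemma filterlim_mblock:
  assumes k: "1 \<le> k"
  shows "filterlim (mblock k) at_top sequentially"
  unfolding filterlim_at_top eventually_sequentially
proof (intro allI exI[of _ "(2*_+3)*k"] impI)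
  fix Z n assume n: "(2*Z+3)*k \<le> n"
  moreover have "k \<le> (2*Z+3)*k" by simp
  ultimately have "k \<le> n" by linarith
  show "Z \<le> mblock k n"
  proof (rule ccontr)
    assume "\<not> Z \<le> mblock k n"
    then have "(2 * mblock k n + 3) * k \<le> (2*Z+3)*k" by (intro mult_le_mono1) auto
    then show False using mblock_bounds[OF k \<open>k \<le> n\<close>] n by linarith
  qed
qed

lemma block_length_ratio_tendsto:
  assumes k: "1 \<le> k"
  shows "(\<lambda>n. real ((2 * mblock k n + 1) * k) / real n) \<longlonglongrightarrow> 1"
proof (rule tendsto_sandwich[where f="\<lambda>n. 1 - 2 * real k / real n" and h="\<lambda>n. 1"])
  have "1 - 2 * real k / real n \<le> real ((2 * mblock k n + 1) * k) / real n
      \<and> real ((2 * mblock k n + 1) * k) / real n \<le> 1" if "k \<le> n" for n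
  proof -
    have "n \<le> (2 * mblock k n + 1) * k + 2 * k" "(2 * mblock k n + 1) * k \<le> n"
      using mblock_bounds[OF k that] by (simp_all add: algebra_simps)
    then have "real n \<le> real ((2 * mblock k n + 1) * k) + 2 * real k" "real ((2 * mblock k n + 1) * k) \<le> real n"
      by (metis of_nat_add of_nat_le_iff of_nat_mult of_nat_numeral)+
    moreover have n: "0 < real n" using k that by simp
    ultimately have "(real n - 2 * real k) / real n \<le> real ((2 * mblock k n + 1) * k) / real n"
      by (intro divide_right_mono) auto
    moreover have "1 - 2 * real k / real n = (real n - 2 * real k) / real n"
      using n by (simp add: field_simps)
    ultimately show ?thesis using \<open>real ((2 * mblock k n + 1) * k) \<le> real n\<close> n by simp
  qed
  then show "\<forall>\<^sub>F n in sequentially. 1 - 2 * real k / real n \<le> real ((2 * mblock k n + 1) * k) / real n"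
    and "\<forall>\<^sub>F n in sequentially. real ((2 * mblock k n + 1) * k) / real n \<le> 1"
    by (auto intro!: eventually_sequentiallyI[of k])
  show "(\<lambda>n. 1 - 2 * real k / real n) \<longlonglongrightarrow> 1"
    using tendsto_diff[OF tendsto_const lim_const_over_n[of "2 * real k"]] by simp
qed simp

lemma eventually_normalized_close_of_blocks:
  fixes S :: "nat \<Rightarrow> 'v::real_normed_vector"
  assumes k: "1 \<le> k"
    and blocks: "\<forall>\<^sub>F m in sequentially.
                   norm ((1 / (2 * real ((2*m+1)*k))^D) *\<^sub>R S ((2*m+1)*k) - v) \<le> \<delta>"
    and regular: "(\<lambda>n. norm (S n - S ((2 * mblock k n + 1) * k)) / (2 * real n)^D) \<longlonglongrightarrow> 0"
    and \<eta>: "0 < \<eta>"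
  shows "\<forall>\<^sub>F n in sequentially. norm ((1 / (2 * real n)^D) *\<^sub>R S n - v) \<le> \<delta> + \<eta>"
proof -
  define l where "l n = (2 * real n)^D" for n
  define b where "b n = (2 * mblock k n + 1) * k" for n
  define r where "r n = l (b n) / l n" for n
  have r: "(\<lambda>n. \<bar>r n - 1\<bar>) \<longlonglongrightarrow> 0"
  proof -
    have "r = (\<lambda>n. (real (b n) / real n)^D)"
      unfolding r_def l_def by (simp add: power_divide)
    then have "r \<longlonglongrightarrow> 1"
      using tendsto_power[OF block_length_ratio_tendsto[OF k], of D] by (simp add: b_def)
    then show ?thesis by (simp add: LIM_zero tendsto_rabs_zero)
  qed
  have "(\<lambda>n. norm (S n - S (b n)) / l n + \<bar>r n - 1\<bar> * (norm v + \<delta>)) \<longlonglongrightarrow> 0 + 0 * (norm v + \<delta>)"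
    using regular unfolding b_def l_def by (intro tendsto_add tendsto_mult r tendsto_const)
  then have small: "\<forall>\<^sub>F n in sequentially. norm (S n - S (b n)) / l n + \<bar>r n - 1\<bar> * (norm v + \<delta>) < \<eta>"
    using \<eta> by (auto dest: order_tendstoD)
  have "\<forall>\<^sub>F n in sequentially. norm ((1 / l (b n)) *\<^sub>R S (b n) - v) \<le> \<delta>"
    using eventually_compose_filterlim[OF blocks filterlim_mblock[OF k]] by (simp add: b_def l_def)
  then show ?thesis
    using small eventually_ge_at_top[of k]
  proof eventually_elim
    case (elim n)
    have "0 < b n" using k unfolding b_def by simp
    then have l: "0 < l n" "0 < l (b n)" using k elim unfolding l_def by auto
    have "(1 / l n) *\<^sub>R S n - v
        = (1 / l n) *\<^sub>R (S n - S (b n)) + (r n - 1) *\<^sub>R ((1 / l (b n)) *\<^sub>R S (b n))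
          + ((1 / l (b n)) *\<^sub>R S (b n) - v)"
      using l by (simp add: r_def algebra_simps)
    also have "norm \<dots> \<le> norm (S n - S (b n)) / l n + \<bar>r n - 1\<bar> * (norm v + \<delta>) + \<delta>"
    proof -
      have "norm ((1 / l (b n)) *\<^sub>R S (b n)) \<le> norm v + \<delta>"
        using elim norm_triangle_sub[of "(1 / l (b n)) *\<^sub>R S (b n)" v] by linarith
      then have "norm ((r n - 1) *\<^sub>R ((1 / l (b n)) *\<^sub>R S (b n))) \<le> \<bar>r n - 1\<bar> * (norm v + \<delta>)"
        unfolding norm_scaleR by (rule mult_left_mono) simp
      moreover have "norm ((1 / l n) *\<^sub>R (S n - S (b n))) = norm (S n - S (b n)) / l n"
        using l by simp
      ultimately show ?thesis
        using elim by (intro norm_triangle_le add_mono) auto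
    qed
    finally show ?case using elim unfolding l_def by simp
  qed
qed

lemma tendsto_common_limit_of_approximation:
  fixes s \<nu> :: "nat \<Rightarrow> 'v::complete_space"
  assumes approx: "\<And>e. 0 < e \<Longrightarrow> \<forall>\<^sub>F k in sequentially. \<forall>\<^sub>F n in sequentially. dist (s n) (\<nu> k) \<le> e"
  shows "\<exists>L. s \<longlonglongrightarrow> L \<and> \<nu> \<longlonglongrightarrow> L"
proof -
  have "Cauchy s"
  proof (rule metric_CauchyI)
    fix e :: real assume "0 < e"
    then obtain k where "\<forall>\<^sub>F n in sequentially. dist (s n) (\<nu> k) \<le> e / 3"
      using eventually_happens'[OF sequentially_bot approx[of "e / 3"]] by auto
    then obtain N where N: "\<And>n. N \<le> n \<Longrightarrow> dist (s n) (\<nu> k) \<le> e / 3"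
      unfolding eventually_sequentially by blast
    have "dist (s m) (s n) < e" if "N \<le> m" "N \<le> n" for m n
      using dist_triangle2[of "s m" "s n" "\<nu> k"] N[OF that(1)] N[OF that(2)] \<open>0 < e\<close> by linarith
    then show "\<exists>N. \<forall>m\<ge>N. \<forall>n\<ge>N. dist (s m) (s n) < e" by blast
  qed
  then obtain L where L: "s \<longlonglongrightarrow> L" by (auto simp: convergent_def Cauchy_convergent_iff)
  have "\<nu> \<longlonglongrightarrow> L"
  proof (rule tendstoI)
    fix e :: real assume "0 < e"
    have "\<forall>\<^sub>F k in sequentially. \<forall>\<^sub>F n in sequentially. dist (s n) (\<nu> k) \<le> e / 2"
      using \<open>0 < e\<close> by (intro approx) simp
    then show "\<forall>\<^sub>F k in sequentially. dist (\<nu> k) L < e"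
    proof (rule eventually_mono)
      fix k assume "\<forall>\<^sub>F n in sequentially. dist (s n) (\<nu> k) \<le> e / 2"
      then have "dist L (\<nu> k) \<le> e / 2"
        by (rule tendsto_upperbound[OF tendsto_dist[OF L tendsto_const]]) simp
      then show "dist (\<nu> k) L < e" using \<open>0 < e\<close> by (simp add: dist_commute)
    qed
  qed
  with L show ?thesis by blast
qed

lemma eventually_block_normalized_close:
  fixes S :: "nat \<Rightarrow> 'v::real_normed_vector" and A :: "nat \<Rightarrow> 'v"
  assumes k: "1 \<le> k" and \<delta>: "0 < \<delta>"
    and close: "\<And>m. 1 \<le> m \<Longrightarrow> norm (S ((2*m+1)*k) - A m) / (2 * real ((2*m+1)*k))^D \<le> \<delta>"
    and lim: "(\<lambda>m. (1 / real ((2*m+1)^D)) *\<^sub>R A m) \<longlonglongrightarrow> \<mu>"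
  shows "\<forall>\<^sub>F m in sequentially.
           norm ((1 / (2 * real ((2*m+1)*k))^D) *\<^sub>R S ((2*m+1)*k) - (1 / (2 * real k)^D) *\<^sub>R \<mu>) \<le> \<delta> + \<delta>"
proof -
  define \<nu> where "\<nu> = (1 / (2 * real k)^D) *\<^sub>R \<mu>"
  have volume: "(2 * real ((2*m+1)*k))^D = real ((2*m+1)^D) * (2 * real k)^D" for m
  proof -
    have "2 * real ((2*m+1)*k) = real (2*m+1) * (2 * real k)" by (simp add: algebra_simps)
    then show ?thesis by (simp only: power_mult_distrib of_nat_power)
  qed
  have "(\<lambda>m. (1 / (2 * real k)^D) *\<^sub>R ((1 / real ((2*m+1)^D)) *\<^sub>R A m)) \<longlonglongrightarrow> \<nu>"
    unfolding \<nu>_def using lim by (intro tendsto_scaleR tendsto_const)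
  moreover have "(\<lambda>m. (1 / (2 * real k)^D) *\<^sub>R ((1 / real ((2*m+1)^D)) *\<^sub>R A m))
               = (\<lambda>m. (1 / (2 * real ((2*m+1)*k))^D) *\<^sub>R A m)"
    unfolding volume scaleR_scaleR by (simp add: mult.commute)
  ultimately have lim_A: "(\<lambda>m. (1 / (2 * real ((2*m+1)*k))^D) *\<^sub>R A m) \<longlonglongrightarrow> \<nu>"
    by simp
  show ?thesis
    using tendstoD[OF lim_A \<delta>] eventually_ge_at_top[of 1] unfolding \<nu>_def[symmetric]
  proof eventually_elim
    case (elim m)
    have "0 < (2 * real ((2*m+1)*k))^D" using k by (simp add: add_pos_nonneg)
    then have "norm ((1 / (2 * real ((2*m+1)*k))^D) *\<^sub>R S ((2*m+1)*k)
                     - (1 / (2 * real ((2*m+1)*k))^D) *\<^sub>R A m) \<le> \<delta>"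
      using close[OF elim(2)] by (simp flip: scaleR_diff_right)
    then show ?case
      using elim(1) norm_triangle_ineq[of "(1 / (2 * real ((2*m+1)*k))^D) *\<^sub>R S ((2*m+1)*k)
              - (1 / (2 * real ((2*m+1)*k))^D) *\<^sub>R A m" "(1 / (2 * real ((2*m+1)*k))^D) *\<^sub>R A m - \<nu>"]
      by (simp add: dist_norm)
  qed
qed

lemma normalized_tendsto_of_block_approximation:
  fixes S :: "nat \<Rightarrow> 'v::banach" and A :: "nat \<Rightarrow> nat \<Rightarrow> 'v" and \<mu> :: "nat \<Rightarrow> 'v"
  assumes blocks: "\<forall>\<^sub>F k in sequentially. (\<lambda>m. (1 / real ((2*m+1)^D)) *\<^sub>R A k m) \<longlonglongrightarrow> \<mu> k"
    and regular: "\<And>k. 1 \<le> k \<Longrightarrow> (\<lambda>n. norm (S n - S ((2 * mblock k n + 1) * k)) / (2 * real n)^D) \<longlonglongrightarrow> 0"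
    and additive: "(\<lambda>k. SUP m\<in>{1..}. ereal (norm (S ((2*m+1)*k) - A k m) / (2 * real ((2*m+1)*k))^D))
                     \<longlonglongrightarrow> 0"
  shows "\<exists>L. (\<lambda>n. (1 / (2 * real n)^D) *\<^sub>R S n) \<longlonglongrightarrow> L \<and> (\<lambda>k. (1 / (2 * real k)^D) *\<^sub>R \<mu> k) \<longlonglongrightarrow> L"
proof (rule tendsto_common_limit_of_approximation)
  fix e :: real assume "0 < e"
  define \<delta> where "\<delta> = e / 3"
  have \<delta>: "0 < \<delta>" using \<open>0 < e\<close> by (simp add: \<delta>_def)
  have "\<forall>\<^sub>F k in sequentially.
          (SUP m\<in>{1..}. ereal (norm (S ((2*m+1)*k) - A k m) / (2 * real ((2*m+1)*k))^D)) < ereal \<delta>"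
    using order_tendstoD(2)[OF additive, of "ereal \<delta>"] \<delta> by (simp add: zero_ereal_def)
  then show "\<forall>\<^sub>F k in sequentially. \<forall>\<^sub>F n in sequentially.
               dist ((1 / (2 * real n)^D) *\<^sub>R S n) ((1 / (2 * real k)^D) *\<^sub>R \<mu> k) \<le> e"
    using blocks eventually_ge_at_top[of 1]
  proof eventually_elim
    case (elim k)
    have "norm (S ((2*m+1)*k) - A k m) / (2 * real ((2*m+1)*k))^D \<le> \<delta>" if "1 \<le> m" for m
      using order.strict_trans1[OF SUP_upper[of m "{1..}"] elim(1)] that by simp
    from eventually_block_normalized_close[OF \<open>1 \<le> k\<close> \<delta> this elim(2)]
    have "\<forall>\<^sub>F n in sequentially. norm ((1 / (2 * real n)^D) *\<^sub>R S n - (1 / (2 * real k)^D) *\<^sub>R \<mu> k) \<le> \<delta> + \<delta> + \<delta>"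
      by (rule eventually_normalized_close_of_blocks[OF \<open>1 \<le> k\<close> _ regular[OF \<open>1 \<le> k\<close>] \<delta>])
    then show ?case unfolding \<delta>_def by (elim eventually_mono) (simp add: dist_norm)
  qed
qed

lemma normalized_shift_tendsto:
  fixes f :: "nat \<Rightarrow> 'v::real_normed_vector"
  assumes "(\<lambda>k. (1 / (2 * real k)^D) *\<^sub>R f (k - r)) \<longlonglongrightarrow> L"
  shows "(\<lambda>j. (1 / (2 * real j)^D) *\<^sub>R f j) \<longlonglongrightarrow> L"
proof -
  have "(\<lambda>j. real (j + r) / real j) \<longlonglongrightarrow> 1"
  proof -
    have "(\<lambda>j. 1 + real r / real j) \<longlonglongrightarrow> 1"
      using tendsto_add[OF tendsto_const lim_const_over_n[of "real r"]] by simp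
    moreover have "\<forall>\<^sub>F j in sequentially. 1 + real r / real j = real (j + r) / real j"
      using eventually_ge_at_top[of 1] by eventually_elim (simp add: field_simps)
    ultimately show ?thesis by (rule Lim_transform_eventually)
  qed
  then have "(\<lambda>j. (real (j + r) / real j)^D *\<^sub>R ((1 / (2 * real (j + r))^D) *\<^sub>R f (j + r - r)))
               \<longlonglongrightarrow> 1^D *\<^sub>R L"
    using LIMSEQ_ignore_initial_segment[OF assms, of r] by (intro tendsto_scaleR tendsto_power)
  moreover have "\<forall>\<^sub>F j in sequentially.
      (real (j + r) / real j)^D *\<^sub>R ((1 / (2 * real (j + r))^D) *\<^sub>R f (j + r - r)) = (1 / (2 * real j)^D) *\<^sub>R f j"
    using eventually_ge_at_top[of 1]
  proof eventually_elim
    case (elim j)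
    then have "0 < real j" "0 < real j + real r" by simp_all
    then have "(real (j + r) / real j)^D * (1 / (2 * real (j + r))^D) = 1 / (2 * real j)^D"
      by (simp only: power_mult_distrib power_divide) (simp add: field_simps)
    then show ?case by simp
  qed
  ultimately have "(\<lambda>j. (1 / (2 * real j)^D) *\<^sub>R f j) \<longlonglongrightarrow> 1^D *\<^sub>R L"
    by (rule Lim_transform_eventually)
  then show ?thesis by simp
qed

lemma (in prob_space) AE_common_limit:
  fixes X :: "'a \<Rightarrow> nat \<Rightarrow> 'v::t2_space" and c :: "nat \<Rightarrow> 'v"
  assumes "AE \<omega> in M. \<exists>L. X \<omega> \<longlonglongrightarrow> L \<and> c \<longlonglongrightarrow> L"
  shows "\<exists>L. c \<longlonglongrightarrow> L \<and> (AE \<omega> in M. X \<omega> \<longlonglongrightarrow> L)"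
proof -
  have "\<exists>\<omega> L. X \<omega> \<longlonglongrightarrow> L \<and> c \<longlonglongrightarrow> L"
  proof (rule ccontr)
    assume none: "\<nexists>\<omega> L. X \<omega> \<longlonglongrightarrow> L \<and> c \<longlonglongrightarrow> L"
    from assms have "AE \<omega> in M. False" by eventually_elim (use none in blast)
    then show False by (simp add: AE_False)
  qed
  then obtain L where L: "c \<longlonglongrightarrow> L" by blast
  from assms have "AE \<omega> in M. X \<omega> \<longlonglongrightarrow> L"
    by eventually_elim (use L LIMSEQ_unique in blast)
  with L show ?thesis by blast
qed

theorem mainTheorem15:
  fixes M :: "'a measure" and S :: "nat \<Rightarrow> 'a \<Rightarrow> real^'h::finite"
  assumes "prob_space M"
    and "\<forall>n\<ge>1. integrable M (S n)"
    and "strongly_regular M TYPE('d::finite) S"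
    and "strongly_nearly_additive M TYPE('d) S"
    and "\<exists>B. \<forall>n\<ge>1. norm (integral\<^sup>L M (S n)) / lam_vol TYPE('d) n \<le> B"
  shows "\<exists>L :: real^'h.
           (\<lambda>n. (1 / lam_vol TYPE('d) n) *\<^sub>R integral\<^sup>L M (S n)) \<longlonglongrightarrow> L \<and>
           (AE \<omega> in M. (\<lambda>n. (1 / lam_vol TYPE('d) n) *\<^sub>R S n \<omega>) \<longlonglongrightarrow> L)"
proof -
  interpret prob_space M by (fact assms(1))
  from assms(4) obtain r and Sc :: "nat \<Rightarrow> int^'d \<Rightarrow> 'a \<Rightarrow> real^'h" where
    copies: "\<forall>n\<ge>1. (\<forall>z. Sc n z \<in> borel_measurable M \<and> distr M borel (Sc n z) = distr M borel (S n))
                   \<and> indep_vars (\<lambda>_. borel) (Sc n) UNIV"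
    and additive: "AE \<omega> in M. (\<lambda>k. SUP m\<in>{1..}. ereal (norm (S ((2*m+1)*k) \<omega> - (\<Sum>z\<in>zbox m. Sc (k - r) z \<omega>))
                     / (2 * real ((2*m+1)*k))^CARD('d))) \<longlonglongrightarrow> 0"
    unfolding strongly_nearly_additive_def strongly_r_nearly_additive_def lam_vol_def by blast
  have regular: "AE \<omega> in M. \<forall>k\<ge>1.
      (\<lambda>n. norm (S n \<omega> - S ((2 * mblock k n + 1) * k) \<omega>) / (2 * real n)^CARD('d)) \<longlonglongrightarrow> 0"
    using assms(3) unfolding strongly_regular_def lam_vol_def AE_all_countable by auto
  have "AE \<omega> in M. \<exists>L. (\<lambda>n. (1 / (2 * real n)^CARD('d)) *\<^sub>R S n \<omega>) \<longlonglongrightarrow> L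
                      \<and> (\<lambda>k. (1 / (2 * real k)^CARD('d)) *\<^sub>R expectation (S (k - r))) \<longlonglongrightarrow> L"
    using AE_copies_zbox_average_tendsto[OF copies assms(2)] regular additive
  proof eventually_elim
    case (elim \<omega>)
    then show ?case
      by (intro normalized_tendsto_of_block_approximation[where A="\<lambda>k m. \<Sum>z\<in>zbox m. Sc (k - r) z \<omega>"])
         (auto intro!: eventually_sequentiallyI[of "r + 1"])
  qed
  from AE_common_limit[OF this] obtain L
    where expectation: "(\<lambda>k. (1 / (2 * real k)^CARD('d)) *\<^sub>R expectation (S (k - r))) \<longlonglongrightarrow> L"
      and "AE \<omega> in M. (\<lambda>n. (1 / (2 * real n)^CARD('d)) *\<^sub>R S n \<omega>) \<longlonglongrightarrow> L"
    by blast
  with normalized_shift_tendsto[OF expectation] show ?thesis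
    unfolding lam_vol_def by blast
qed

end
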